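(* For every $n\ge1$, every $n\times n$ Hermitian matrix $A$ and every $1\le m\le n$, $$Y_{n,m}(A)\succ X_m(A),$$ i.e. the concatenation of $\binom{n-1}{m-1}$ copies of the eigenvalue vector of $A$ majorizes the vector of all eigenvalues of all $m\times m$ principal submatrices of $A$.
   Context: $\lambda(A)$ is the eigenvalue vector of $A$ with multiplicity; $X_m(A)$ is the vector listing the eigenvalues, with multiplicity, of all $\binom nm$ principal $m\times m$ submatrices of $A$; $Y_{n,m}(A)$ is the concatenation of $\binom{n-1}{m-1}$ copies of $\lambda(A)$. For $x,y\in\mathbb R^N$, $x\succ y$ means $\sum_{i=1}^k x^{\downarrow}_i\ge\sum_{i=1}^k y^{\downarrow}_i$ for $k=1,\dots,N$ with equality at $k=N$, where $x^{\downarrow}$ is the non-increasing rearrangement. *)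

theory Defs
  imports "Jordan_Normal_Form.Char_Poly" "Jordan_Normal_Form.DL_Submatrix"
begin

definition hermitian_mat :: "nat \<Rightarrow> complex mat \<Rightarrow> bool" where
  "hermitian_mat n A \<longleftrightarrow> A \<in> carrier_mat n n \<and>
     (\<forall>i<n. \<forall>j<n. A $$ (i, j) = cnj (A $$ (j, i)))"

text \<open>Eigenvalues with multiplicity (roots of the characteristic polynomial),
  as reals (for Hermitian matrices they are real).\<close>
definition eig_mset :: "complex mat \<Rightarrow> real multiset" where
  "eig_mset A = image_mset Re (proots (char_poly A))"

definition X_mset :: "nat \<Rightarrow> complex mat \<Rightarrow> real multiset" where
  "X_mset m A = (\<Sum>S \<in> {S. S \<subseteq> {..<dim_row A} \<and> card S = m}. eig_mset (submatrix A S S))"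

definition Y_mset :: "nat \<Rightarrow> nat \<Rightarrow> complex mat \<Rightarrow> real multiset" where
  "Y_mset n m A = repeat_mset ((n - 1) choose (m - 1)) (eig_mset A)"

definition decr :: "real multiset \<Rightarrow> real list" where
  "decr x = rev (sorted_list_of_multiset x)"

definition majorizes :: "real multiset \<Rightarrow> real multiset \<Rightarrow> bool" where
  "majorizes x y \<longleftrightarrow> size x = size y \<and>
     (\<forall>k\<in>{1..size x}. sum_list (take k (decr y)) \<le> sum_list (take k (decr x))) \<and>
     sum_list (decr x) = sum_list (decr y)"

end

(*
  Diagonalise A = U diag(lambda) U^* by the spectral theorem, and likewise each principal
  submatrix A_S = V diag(mu) V^*. Let w_jl be the squared modulus of the inner product of the
  j-th eigenvector of A_S (extended by zeros to C^n) with the l-th eigenvector of A. Then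
  mu_j = sum_l w_jl lambda_l with sum_l w_jl = 1, and sum_j w_jl = sum_(i in S) |U_il|^2.
  Every index lies in exactly binom(n-1, m-1) of the m-subsets S, so Jensen's inequality gives
  sum_(x in X_m(A)) g x <= sum_(y in Y_(n,m)(A)) g y for every convex g. The test functions
  g = +-1, g = +-id and g x = max 0 (x - t), with t the k-th largest element of Y_(n,m)(A),
  turn this into the majorization.
*)

theory Submission
  imports Defs "Jordan_Normal_Form.Spectral_Radius" "HOL-Analysis.Convex"
begin

section \<open>Adjoints and unitary matrices\<close>

lemma index_mult_mat_sum:
  assumes "A \<in> carrier_mat nr n" "B \<in> carrier_mat n nc" "i < nr" "j < nc"
  shows "(A * B) $$ (i, j) = (\<Sum>k<n. A $$ (i, k) * B $$ (k, j))"
  using assms by (auto simp: scalar_prod_def lessThan_atLeast0 intro!: sum.cong)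

lemma mat_adjoint_dim [simp]:
  "dim_row (mat_adjoint A) = dim_col A" "dim_col (mat_adjoint A) = dim_row A"
  by (simp_all add: mat_adjoint_def)

lemma mat_adjoint_index [simp]:
  "i < dim_col A \<Longrightarrow> j < dim_row A \<Longrightarrow> mat_adjoint A $$ (i, j) = cnj (A $$ (j, i))"
  by (simp add: mat_adjoint_def mat_of_rows_index)

lemma mat_adjoint_carrier [simp]: "A \<in> carrier_mat n m \<Longrightarrow> mat_adjoint A \<in> carrier_mat m n"
  unfolding carrier_mat_def by simp

lemma mat_adjoint_adjoint [simp]: "mat_adjoint (mat_adjoint A) = (A :: complex mat)"
  by (rule eq_matI) auto

lemma mat_adjoint_mult:
  fixes A B :: "complex mat"
  assumes A: "A \<in> carrier_mat nr n" and B: "B \<in> carrier_mat n nc"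
  shows "mat_adjoint (A * B) = mat_adjoint B * mat_adjoint A"
proof (rule eq_matI)
  fix i j assume "i < dim_row (mat_adjoint B * mat_adjoint A)" "j < dim_col (mat_adjoint B * mat_adjoint A)"
  then have i: "i < nc" and j: "j < nr" using A B by auto
  have "mat_adjoint (A * B) $$ (i, j) = cnj (\<Sum>k<n. A $$ (j, k) * B $$ (k, i))"
    using A B i j by (simp add: index_mult_mat_sum[OF A B j i])
  also have "\<dots> = (\<Sum>k<n. mat_adjoint B $$ (i, k) * mat_adjoint A $$ (k, j))"
    using A B i j by (simp add: mult.commute)
  also have "\<dots> = (mat_adjoint B * mat_adjoint A) $$ (i, j)"
    using index_mult_mat_sum[OF mat_adjoint_carrier[OF B] mat_adjoint_carrier[OF A] i j] by simp
  finally show "mat_adjoint (A * B) $$ (i, j) = (mat_adjoint B * mat_adjoint A) $$ (i, j)" .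
qed (use A B in auto)

lemma hermitian_mat_iff_adjoint:
  "hermitian_mat n A \<longleftrightarrow> A \<in> carrier_mat n n \<and> mat_adjoint A = A"
proof (cases "A \<in> carrier_mat n n")
  case True
  then have "mat_adjoint A = A \<longleftrightarrow> (\<forall>i<n. \<forall>j<n. cnj (A $$ (j, i)) = A $$ (i, j))"
    by (auto simp: mat_eq_iff)
  then show ?thesis
    unfolding hermitian_mat_def using True by metis
qed (simp add: hermitian_mat_def)

definition unitary_mat :: "nat \<Rightarrow> complex mat \<Rightarrow> bool" where
  "unitary_mat n U \<longleftrightarrow> U \<in> carrier_mat n n \<and> mat_adjoint U * U = 1\<^sub>m n"

lemma unitary_mat_mult_adjoint:
  "unitary_mat n U \<Longrightarrow> U * mat_adjoint U = 1\<^sub>m n"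
  unfolding unitary_mat_def by (metis mat_adjoint_carrier mat_mult_left_right_inverse)

lemma unitary_mat_mult:
  assumes "unitary_mat n U" and "unitary_mat n V"
  shows "unitary_mat n (U * V)"
proof -
  have U: "U \<in> carrier_mat n n" and V: "V \<in> carrier_mat n n"
    and UU: "mat_adjoint U * U = 1\<^sub>m n" and VV: "mat_adjoint V * V = 1\<^sub>m n"
    using assms unfolding unitary_mat_def by auto
  have "mat_adjoint (U * V) * (U * V) = mat_adjoint V * (mat_adjoint U * U * V)"
    using U V by (simp add: mat_adjoint_mult[OF U V] assoc_mult_mat[of _ n n _ n _ n])
  also have "\<dots> = 1\<^sub>m n"
    using V by (simp add: UU VV)
  finally show ?thesis
    unfolding unitary_mat_def using U V by auto
qed

lemma unitary_matI:
  assumes "W \<in> carrier_mat n n"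
    and "\<And>i j. i < n \<Longrightarrow> j < n \<Longrightarrow> col W j \<bullet>c col W i = (if i = j then 1 else 0)"
  shows "unitary_mat n W"
proof -
  have "(mat_adjoint W * W) $$ (i, j) = col W j \<bullet>c col W i" if "i < n" "j < n" for i j
    using assms(1) that
    by (auto simp: index_mult_mat_sum[of _ n n] scalar_prod_def lessThan_atLeast0 mult.commute
        intro!: sum.cong)
  with assms show ?thesis
    unfolding unitary_mat_def by auto
qed

lemma unitary_mat_cols_orthonormal:
  assumes "unitary_mat n U" "i < n" "j < n"
  shows "(\<Sum>k<n. cnj (U $$ (k, i)) * U $$ (k, j)) = (if i = j then 1 else 0)"
  using assms index_mult_mat_sum[of "mat_adjoint U" n n U n i j]
  unfolding unitary_mat_def by auto

lemma unitary_mat_rows_orthonormal: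
  assumes "unitary_mat n U" "i < n" "j < n"
  shows "(\<Sum>k<n. U $$ (i, k) * cnj (U $$ (j, k))) = (if i = j then 1 else 0)"
  using assms index_mult_mat_sum[of U n n "mat_adjoint U" n i j] unitary_mat_mult_adjoint[OF assms(1)]
  unfolding unitary_mat_def by auto

lemma unitary_mat_col_norm:
  assumes "unitary_mat n U" "l < n"
  shows "(\<Sum>i<n. (cmod (U $$ (i, l)))\<^sup>2) = 1"
proof -
  have "complex_of_real (\<Sum>i<n. (cmod (U $$ (i, l)))\<^sup>2) = (\<Sum>i<n. cnj (U $$ (i, l)) * U $$ (i, l))"
    by (simp only: of_real_sum complex_norm_square mult.commute)
  also have "\<dots> = 1"
    using unitary_mat_cols_orthonormal[OF assms(1) assms(2) assms(2)] by simp
  finally show ?thesis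
    by (metis of_real_eq_1_iff)
qed

lemma cscalar_prod_smult_of_real:
  assumes "v \<in> carrier_vec n" "w \<in> carrier_vec n"
  shows "(complex_of_real a \<cdot>\<^sub>v v) \<bullet>c (complex_of_real b \<cdot>\<^sub>v w) = of_real (a * b) * (v \<bullet>c w)"
  using assms by (auto simp: scalar_prod_def sum_distrib_left intro!: sum.cong)

definition vec_normalize :: "complex vec \<Rightarrow> complex vec" where
  "vec_normalize w = complex_of_real (1 / sqrt (Re (w \<bullet>c w))) \<cdot>\<^sub>v w"

lemma vec_normalize_carrier [simp]: "w \<in> carrier_vec n \<Longrightarrow> vec_normalize w \<in> carrier_vec n"
  by (simp add: vec_normalize_def)

lemma unitary_mat_of_corthogonal_cols:
  assumes ws: "set ws \<subseteq> carrier_vec n" "corthogonal ws" "length ws = n"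
  shows "unitary_mat n (mat_of_cols n (map vec_normalize ws))"
proof (rule unitary_matI)
  show "mat_of_cols n (map vec_normalize ws) \<in> carrier_mat n n"
    using ws by auto
next
  fix i j assume i: "i < n" and j: "j < n"
  let ?W = "mat_of_cols n (map vec_normalize ws)" and ?r = "\<lambda>w. Re (w \<bullet>c w)"
  have wi: "ws ! i \<in> carrier_vec n" and wj: "ws ! j \<in> carrier_vec n"
    using ws i j by auto
  have "col ?W k = vec_normalize (ws ! k)" if "k < n" for k
  proof -
    have "ws ! k \<in> carrier_vec n"
      using ws that nth_mem by blast
    then show ?thesis
      using ws that by (subst col_mat_of_cols) auto
  qed
  then have "col ?W j \<bullet>c col ?W i =
      of_real (1 / sqrt (?r (ws ! j)) * (1 / sqrt (?r (ws ! i)))) * (ws ! j \<bullet>c ws ! i)"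
    unfolding vec_normalize_def using i j by (simp only: cscalar_prod_smult_of_real[OF wj wi])
  also have "\<dots> = (if i = j then 1 else 0)"
  proof (cases "i = j")
    case True
    have "ws ! i \<bullet>c ws ! i > 0"
      using corthogonalD[OF ws(2), of i i] ws i wi by auto
    then obtain r where "ws ! i \<bullet>c ws ! i = of_real r" "r > 0"
      by (auto simp: less_complex_def complex_eq_iff)
    then show ?thesis
      using True by (simp add: field_simps flip: of_real_mult)
  qed (use corthogonalD[OF ws(2), of j i] ws i j in auto)
  finally show "col ?W j \<bullet>c col ?W i = (if i = j then 1 else 0)" .
qed

lemma unitary_mat_first_col:
  assumes v: "v \<in> carrier_vec n" and v0: "v \<noteq> 0\<^sub>v n"
  obtains W c where "unitary_mat n W" "col W 0 = c \<cdot>\<^sub>v v"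
proof -
  interpret cof_vec_space n "TYPE(complex)" .
  define ws where "ws = gram_schmidt n (basis_completion v)"
  have "n \<noteq> 0"
    using v v0 by (metis carrier_vecD eq_vecI less_nat_zero_code zero_carrier_vec)
  with basis_completion[OF v v0] obtain vs where b: "basis_completion v = v # vs"
    by (cases "basis_completion v") auto
  from basis_completion[OF v v0] gram_schmidt_result[OF _ _ _ ws_def]
  have ws: "set ws \<subseteq> carrier_vec n" "corthogonal ws" "length ws = n"
    by auto
  have "hd ws = v"
    unfolding ws_def b using v by simp
  then have "ws ! 0 = v"
    using \<open>n \<noteq> 0\<close> ws(3) by (cases ws) auto
  then have "col (mat_of_cols n (map vec_normalize ws)) 0 = vec_normalize v"
    using ws \<open>n \<noteq> 0\<close> v by (subst col_mat_of_cols) auto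
  then show ?thesis
    using that unitary_mat_of_corthogonal_cols[OF ws] unfolding vec_normalize_def by blast
qed

section \<open>The spectral theorem for Hermitian matrices\<close>

definition diag_block :: "complex \<Rightarrow> complex mat \<Rightarrow> complex mat" where
  "diag_block c M = four_block_mat (mat 1 1 (\<lambda>_. c)) (0\<^sub>m 1 (dim_col M)) (0\<^sub>m (dim_row M) 1) M"

lemma diag_block_carrier [simp]:
  "M \<in> carrier_mat k k \<Longrightarrow> diag_block c M \<in> carrier_mat (Suc k) (Suc k)"
  unfolding diag_block_def by (metis four_block_carrier_mat mat_carrier plus_1_eq_Suc)

lemma diag_block_mult:
  assumes "M \<in> carrier_mat k k" "N \<in> carrier_mat k k"
  shows "diag_block c M * diag_block d N = diag_block (c * d) (M * N)"
  unfolding diag_block_def using assms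
  by (subst mult_four_block_mat[of _ 1 1 _ k _ k _ _ 1 _ k]) (auto simp: scalar_prod_def)

lemma mat_adjoint_diag_block:
  "M \<in> carrier_mat k k \<Longrightarrow> mat_adjoint (diag_block c M) = diag_block (cnj c) (mat_adjoint M)"
  unfolding diag_block_def by (rule eq_matI) auto

lemma diag_block_one [simp]: "diag_block 1 (1\<^sub>m k) = 1\<^sub>m (Suc k)"
  unfolding diag_block_def by (rule eq_matI) auto

lemma diag_block_mat_diag:
  "diag_block c (mat_diag k f) = mat_diag (Suc k) (case_nat c f)"
  unfolding diag_block_def mat_diag_def by (rule eq_matI) (auto split: nat.split)

lemma unitary_mat_diag_block:
  assumes "unitary_mat k P"
  shows "unitary_mat (Suc k) (diag_block 1 P)"
proof -
  have P: "P \<in> carrier_mat k k" and PP: "mat_adjoint P * P = 1\<^sub>m k"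
    using assms unfolding unitary_mat_def by auto
  then show ?thesis
    unfolding unitary_mat_def
    by (simp add: mat_adjoint_diag_block diag_block_mult[OF mat_adjoint_carrier[OF P] P])
qed

lemma hermitian_mat_adjoint_conj:
  assumes A: "hermitian_mat n A" and W: "W \<in> carrier_mat n m"
  shows "hermitian_mat m (mat_adjoint W * A * W)"
proof -
  have A': "A \<in> carrier_mat n n" "mat_adjoint A = A"
    using A unfolding hermitian_mat_iff_adjoint by auto
  have WA: "mat_adjoint W * A \<in> carrier_mat m n"
    using mult_carrier_mat[OF mat_adjoint_carrier[OF W] A'(1)] .
  have "mat_adjoint (mat_adjoint W * A * W) = mat_adjoint W * (mat_adjoint A * W)"
    using A' W by (simp add: mat_adjoint_mult[OF WA W] mat_adjoint_mult[OF mat_adjoint_carrier[OF W] A'(1)])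
  also have "\<dots> = mat_adjoint W * A * W"
    using A' W by (simp add: assoc_mult_mat[of _ m n _ n _ m])
  finally show ?thesis
    using A' W unfolding hermitian_mat_iff_adjoint by auto
qed

lemma col_unitary_conj_eigenvector:
  assumes W: "unitary_mat n W" and A: "A \<in> carrier_mat n n" and n: "0 < n"
    and ev: "A *\<^sub>v col W 0 = e \<cdot>\<^sub>v col W 0"
  shows "col (mat_adjoint W * A * W) 0 = e \<cdot>\<^sub>v unit_vec n 0"
proof -
  have Wc: "W \<in> carrier_mat n n" and W'c: "mat_adjoint W \<in> carrier_mat n n"
    and WW: "mat_adjoint W * W = 1\<^sub>m n"
    using W unfolding unitary_mat_def by auto
  have W0: "col W 0 \<in> carrier_vec n"
    using col_dim[of W 0] Wc by simp
  have "col (mat_adjoint W * A * W) 0 = mat_adjoint W *\<^sub>v (A *\<^sub>v col W 0)"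
    using n by (simp add: col_mult2[OF mult_carrier_mat[OF W'c A] Wc] assoc_mult_mat_vec[OF W'c A W0])
  also have "\<dots> = e \<cdot>\<^sub>v col (mat_adjoint W * W) 0"
    unfolding ev using n by (simp add: mult_mat_vec[OF W'c W0] col_mult2[OF W'c Wc])
  finally show ?thesis
    unfolding WW using n by simp
qed

lemma hermitian_mat_first_col_unit_vec:
  assumes B: "hermitian_mat (Suc k) B" and col_B: "col B 0 = e \<cdot>\<^sub>v unit_vec (Suc k) 0"
  obtains B' where "hermitian_mat k B'" "e \<in> \<real>" "B = diag_block e B'"
proof -
  have Bc: "B \<in> carrier_mat (Suc k) (Suc k)"
    and herm: "\<And>i j. i < Suc k \<Longrightarrow> j < Suc k \<Longrightarrow> B $$ (i, j) = cnj (B $$ (j, i))"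
    using B unfolding hermitian_mat_def by blast+
  have B_col: "B $$ (i, 0) = (if i = 0 then e else 0)" if "i < Suc k" for i
  proof -
    have "B $$ (i, 0) = col B 0 $ i"
      using Bc that by simp
    then show ?thesis
      unfolding col_B using that by simp
  qed
  have e_real: "cnj e = e"
    using herm[of 0 0] B_col[of 0] by (metis zero_less_Suc)
  have B_row: "B $$ (0, j) = (if j = 0 then e else 0)" if "j < Suc k" for j
  proof -
    have "B $$ (0, j) = cnj (B $$ (j, 0))"
      using herm that by blast
    then show ?thesis
      using B_col[OF that] e_real by simp
  qed
  define B' where "B' = mat k k (\<lambda>(i, j). B $$ (Suc i, Suc j))"
  have "hermitian_mat k B'"
    unfolding hermitian_mat_def B'_def by (auto intro: herm)
  moreover have "B = diag_block e B'"
  proof (rule eq_matI)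
    fix i j assume "i < dim_row (diag_block e B')" "j < dim_col (diag_block e B')"
    then have "i < Suc k" "j < Suc k"
      unfolding B'_def by (auto simp: diag_block_def)
    then show "B $$ (i, j) = diag_block e B' $$ (i, j)"
      using B_col B_row unfolding diag_block_def B'_def by (cases i; cases j) auto
  qed (use Bc in \<open>auto simp: diag_block_def B'_def\<close>)
  ultimately show ?thesis
    using that e_real Reals_cnj_iff by blast
qed

lemma diag_block_conj:
  assumes "P \<in> carrier_mat k k" "D \<in> carrier_mat k k"
  shows "diag_block e (P * D * mat_adjoint P) = diag_block 1 P * diag_block e D * mat_adjoint (diag_block 1 P)"
  using assms by (simp add: mat_adjoint_diag_block diag_block_mult[of _ k])

lemma unitary_mat_conj_compose:
  assumes W: "unitary_mat n W" and A: "A \<in> carrier_mat n n"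
    and F: "F \<in> carrier_mat n n" and D: "D \<in> carrier_mat n n"
    and eq: "mat_adjoint W * A * W = F * D * mat_adjoint F"
  shows "A = (W * F) * D * mat_adjoint (W * F)"
proof -
  have Wc: "W \<in> carrier_mat n n" and W'c: "mat_adjoint W \<in> carrier_mat n n"
    using W unfolding unitary_mat_def by auto
  note assoc = assoc_mult_mat[of _ n n _ n _ n] and carrier = mult_carrier_mat[of _ n n _ n]
  have "A = (W * mat_adjoint W) * A * (W * mat_adjoint W)"
    using A by (simp add: unitary_mat_mult_adjoint[OF W])
  also have "\<dots> = W * (mat_adjoint W * A * W) * mat_adjoint W"
    using Wc W'c A by (simp add: assoc carrier)
  also have "\<dots> = (W * F) * D * mat_adjoint (W * F)"
    unfolding eq using Wc F D by (simp add: mat_adjoint_mult[OF Wc F] assoc carrier)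
  finally show ?thesis .
qed

theorem hermitian_mat_spectral:
  assumes "hermitian_mat n A"
  shows "\<exists>U (d :: nat \<Rightarrow> real). unitary_mat n U \<and> A = U * mat_diag n (\<lambda>i. of_real (d i)) * mat_adjoint U"
  using assms
proof (induction n arbitrary: A)
  case 0
  then show ?case
    unfolding hermitian_mat_def unitary_mat_def
    by (auto intro!: exI[of _ "1\<^sub>m 0"] exI[of _ "\<lambda>_. 0"])
next
  case (Suc k)
  have A: "A \<in> carrier_mat (Suc k) (Suc k)"
    using Suc.prems unfolding hermitian_mat_def by auto
  obtain e v where v: "v \<in> carrier_vec (Suc k)" "v \<noteq> 0\<^sub>v (Suc k)" and Av: "A *\<^sub>v v = e \<cdot>\<^sub>v v"
    using spectrum_non_empty[OF A] A unfolding spectrum_def eigenvalue_def eigenvector_def by auto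
  obtain W c where W: "unitary_mat (Suc k) W" and W0: "col W 0 = c \<cdot>\<^sub>v v"
    using unitary_mat_first_col[OF v] .
  have "A *\<^sub>v col W 0 = e \<cdot>\<^sub>v col W 0"
    unfolding W0 using A v by (simp add: mult_mat_vec[OF A] Av smult_smult_assoc mult.commute)
  then have "col (mat_adjoint W * A * W) 0 = e \<cdot>\<^sub>v unit_vec (Suc k) 0"
    by (rule col_unitary_conj_eigenvector[OF W A zero_less_Suc])
  then obtain A' where A': "hermitian_mat k A'" and "e \<in> \<real>"
    and WAW: "mat_adjoint W * A * W = diag_block e A'"
    using hermitian_mat_first_col_unit_vec hermitian_mat_adjoint_conj[OF Suc.prems] W
    unfolding unitary_mat_def by blast
  obtain P d' where P: "unitary_mat k P"
    and A'_eq: "A' = P * mat_diag k (\<lambda>i. of_real (d' i)) * mat_adjoint P"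
    using Suc.IH[OF A'] by blast
  define d where "d = case_nat (Re e) d'"
  have "mat_diag (Suc k) (\<lambda>i. of_real (d i)) = diag_block e (mat_diag k (\<lambda>i. of_real (d' i)))"
    using \<open>e \<in> \<real>\<close> unfolding d_def diag_block_mat_diag
    by (intro arg_cong[where f = "mat_diag _"]) (auto split: nat.split)
  then have "mat_adjoint W * A * W =
      diag_block 1 P * mat_diag (Suc k) (\<lambda>i. of_real (d i)) * mat_adjoint (diag_block 1 P)"
    using P diag_block_conj[OF _ mat_diag_dim] unfolding WAW A'_eq unitary_mat_def by metis
  then have "A = (W * diag_block 1 P) * mat_diag (Suc k) (\<lambda>i. of_real (d i)) * mat_adjoint (W * diag_block 1 P)"
    using P unfolding unitary_mat_def by (intro unitary_mat_conj_compose[OF W A]) auto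
  moreover have "unitary_mat (Suc k) (W * diag_block 1 P)"
    by (rule unitary_mat_mult[OF W unitary_mat_diag_block[OF P]])
  ultimately show ?case
    by blast
qed

lemma index_mult_mat_diag_adjoint:
  assumes U: "U \<in> carrier_mat n n" and ij: "i < n" "j < n"
  shows "(U * mat_diag n f * mat_adjoint U) $$ (i, j) = (\<Sum>k<n. U $$ (i, k) * f k * cnj (U $$ (j, k)))"
proof -
  have "U * mat_diag n f = mat n n (\<lambda>(i, k). U $$ (i, k) * f k)"
    by (rule mat_diag_mult_right[OF U])
  then have "(U * mat_diag n f * mat_adjoint U) $$ (i, j) =
      (\<Sum>k<n. mat n n (\<lambda>(i, k). U $$ (i, k) * f k) $$ (i, k) * mat_adjoint U $$ (k, j))"
    using index_mult_mat_sum[OF mat_carrier mat_adjoint_carrier[OF U] ij] by simp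
  then show ?thesis
    using U ij by (auto intro!: sum.cong)
qed

lemma proots_prod_linear_factors: "proots (\<Prod>a\<leftarrow>xs. [:- a, 1:]) = mset (xs :: 'a :: idom list)"
proof (induction xs)
  case (Cons a xs)
  have "proots ([:- a, 1:] * (\<Prod>a\<leftarrow>xs. [:- a, 1:])) = proots [:- a, 1:] + proots (\<Prod>a\<leftarrow>xs. [:- a, 1:])"
    by (rule proots_mult) auto
  then show ?case
    using Cons.IH proots_linear_factor[of "- a"] by simp
qed simp

lemma eig_mset_unitary_diag:
  assumes "unitary_mat n U"
  shows "eig_mset (U * mat_diag n (\<lambda>i. complex_of_real (d i)) * mat_adjoint U) = mset (map d [0..<n])"
proof -
  let ?D = "mat_diag n (\<lambda>i. complex_of_real (d i))"
  have U: "U \<in> carrier_mat n n"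
    using assms unfolding unitary_mat_def by auto
  have "similar_mat_wit (U * ?D * mat_adjoint U) ?D U (mat_adjoint U)"
    using assms U unitary_mat_mult_adjoint[OF assms]
    by (intro similar_mat_witI[of _ _ n]) (auto simp: unitary_mat_def)
  then have "char_poly (U * ?D * mat_adjoint U) = char_poly ?D"
    by (intro char_poly_similar) (auto simp: similar_mat_def)
  also have "\<dots> = (\<Prod>a\<leftarrow>diag_mat ?D. [:- a, 1:])"
    by (rule char_poly_upper_triangular[of _ n]) (auto simp: upper_triangular_def mat_diag_def)
  also have "diag_mat ?D = map (\<lambda>i. complex_of_real (d i)) [0..<n]"
    unfolding diag_mat_def by (rule map_cong) (auto simp: mat_diag_def)
  finally have cp: "char_poly (U * ?D * mat_adjoint U) = (\<Prod>a\<leftarrow>map (\<lambda>i. complex_of_real (d i)) [0..<n]. [:- a, 1:])" .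
  show ?thesis
    unfolding eig_mset_def cp proots_prod_linear_factors by (simp add: multiset.map_comp o_def)
qed

section \<open>Eigenvalues of principal submatrices\<close>

lemma quadratic_form_gram:
  fixes x c :: "nat \<Rightarrow> complex" and X :: "nat \<Rightarrow> nat \<Rightarrow> complex"
  shows "(\<Sum>a<m. \<Sum>b<m. cnj (x a) * (\<Sum>k<n. X a k * c k * cnj (X b k)) * x b) =
    (\<Sum>k<n. c k * of_real ((cmod (\<Sum>a<m. cnj (x a) * X a k))\<^sup>2))"
proof -
  have "(\<Sum>a<m. \<Sum>b<m. cnj (x a) * (\<Sum>k<n. X a k * c k * cnj (X b k)) * x b) =
      (\<Sum>k<n. \<Sum>a<m. \<Sum>b<m. c k * (cnj (x a) * X a k) * cnj (cnj (x b) * X b k))"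
    by (simp add: sum_distrib_left sum_distrib_right mult_ac sum.swap[of _ "{..<n}"])
  also have "\<dots> = (\<Sum>k<n. c k * (\<Sum>a<m. cnj (x a) * X a k) * cnj (\<Sum>a<m. cnj (x a) * X a k))"
    by (simp add: sum_distrib_left sum_distrib_right mult_ac)
  finally show ?thesis
    by (simp only: complex_norm_square mult.assoc)
qed

(* |<v_j, u_l>|^2, where u_l is the l-th column of U and v_j the j-th column of V placed at the
   rows s 0, ..., s (m - 1) of C^n. *)
definition overlap_weight :: "nat \<Rightarrow> complex mat \<Rightarrow> complex mat \<Rightarrow> (nat \<Rightarrow> nat) \<Rightarrow> nat \<Rightarrow> nat \<Rightarrow> real" where
  "overlap_weight m V U s j l = (cmod (\<Sum>a<m. cnj (V $$ (a, j)) * U $$ (s a, l)))\<^sup>2"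

lemma overlap_weight_row_sum:
  assumes U: "unitary_mat n U" and V: "unitary_mat m V"
    and s_inj: "inj_on s {..<m}" and s_range: "s ` {..<m} \<subseteq> {..<n}" and j: "j < m"
  shows "(\<Sum>l<n. overlap_weight m V U s j l) = 1"
proof -
  have orth: "(\<Sum>l<n. U $$ (s a, l) * cnj (U $$ (s b, l))) = (if a = b then 1 else 0)"
    if "a < m" "b < m" for a b
  proof -
    have "s a < n" "s b < n"
      using s_range that by auto
    then show ?thesis
      using unitary_mat_rows_orthonormal[OF U, of "s a" "s b"] that inj_onD[OF s_inj, of a b] by auto
  qed
  have "complex_of_real (\<Sum>l<n. overlap_weight m V U s j l) =
      (\<Sum>a<m. \<Sum>b<m. cnj (V $$ (a, j)) * (\<Sum>l<n. U $$ (s a, l) * 1 * cnj (U $$ (s b, l))) * V $$ (b, j))"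
    unfolding quadratic_form_gram overlap_weight_def by simp
  also have "\<dots> = (\<Sum>a<m. \<Sum>b<m. if a = b then cnj (V $$ (a, j)) * V $$ (b, j) else 0)"
    by (intro sum.cong refl) (simp add: orth)
  also have "\<dots> = (\<Sum>a<m. cnj (V $$ (a, j)) * V $$ (a, j))"
    by simp
  also have "\<dots> = 1"
    using unitary_mat_cols_orthonormal[OF V j j] by simp
  finally show ?thesis
    by (metis of_real_eq_1_iff)
qed

lemma overlap_weight_col_sum:
  assumes V: "unitary_mat m V"
  shows "(\<Sum>j<m. overlap_weight m V U s j l) = (\<Sum>a<m. (cmod (U $$ (s a, l)))\<^sup>2)"
proof -
  have orth: "(\<Sum>j<m. cnj (V $$ (a, j)) * V $$ (b, j)) = (if a = b then 1 else 0)"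
    if "a < m" "b < m" for a b
    using unitary_mat_rows_orthonormal[OF V that(2,1)] by (auto simp: mult.commute)
  have "complex_of_real (\<Sum>j<m. overlap_weight m V U s j l) =
      (\<Sum>a<m. \<Sum>b<m. cnj (cnj (U $$ (s a, l))) * (\<Sum>j<m. cnj (V $$ (a, j)) * 1 * cnj (cnj (V $$ (b, j)))) *
        cnj (U $$ (s b, l)))"
    unfolding quadratic_form_gram overlap_weight_def by (simp add: mult.commute)
  also have "\<dots> = (\<Sum>a<m. \<Sum>b<m. if a = b then U $$ (s a, l) * cnj (U $$ (s b, l)) else 0)"
    by (intro sum.cong refl) (simp add: orth)
  also have "\<dots> = (\<Sum>a<m. U $$ (s a, l) * cnj (U $$ (s a, l)))"
    by simp
  also have "\<dots> = complex_of_real (\<Sum>a<m. (cmod (U $$ (s a, l)))\<^sup>2)"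
    by (simp only: of_real_sum complex_norm_square)
  finally show ?thesis
    by (metis of_real_eq_iff)
qed

lemma eigenvalue_eq_overlap_weighted:
  assumes Uc: "U \<in> carrier_mat n n" and V: "unitary_mat m V" and s_range: "s ` {..<m} \<subseteq> {..<n}"
    and principal: "\<And>a b. a < m \<Longrightarrow> b < m \<Longrightarrow>
      (V * mat_diag m (\<lambda>i. complex_of_real (\<mu> i)) * mat_adjoint V) $$ (a, b) =
      (U * mat_diag n (\<lambda>i. complex_of_real (d i)) * mat_adjoint U) $$ (s a, s b)"
    and j: "j < m"
  shows "\<mu> j = (\<Sum>l<n. overlap_weight m V U s j l * d l)"
proof -
  have Vc: "V \<in> carrier_mat m m"
    using V unfolding unitary_mat_def by auto
  have entry: "(\<Sum>k<m. V $$ (a, k) * of_real (\<mu> k) * cnj (V $$ (b, k))) =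
      (\<Sum>k<n. U $$ (s a, k) * of_real (d k) * cnj (U $$ (s b, k)))" if "a < m" "b < m" for a b
  proof -
    have "s a < n" "s b < n"
      using s_range that by auto
    then show ?thesis
      using principal[OF that]
      by (simp add: index_mult_mat_diag_adjoint[OF Vc that] index_mult_mat_diag_adjoint[OF Uc])
  qed
  have orth: "(\<Sum>a<m. cnj (V $$ (a, j)) * V $$ (a, k)) = (if j = k then 1 else 0)" if "k < m" for k
    using unitary_mat_cols_orthonormal[OF V j that] .
  have "(\<Sum>k<m. of_real (\<mu> k) * of_real ((cmod (\<Sum>a<m. cnj (V $$ (a, j)) * V $$ (a, k)))\<^sup>2)) =
      (\<Sum>k<m. if k = j then complex_of_real (\<mu> k) else 0)"
    by (intro sum.cong refl) (simp add: orth)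
  then have "complex_of_real (\<mu> j) =
      (\<Sum>k<m. of_real (\<mu> k) * of_real ((cmod (\<Sum>a<m. cnj (V $$ (a, j)) * V $$ (a, k)))\<^sup>2))"
    using j by simp
  also have "\<dots> = (\<Sum>a<m. \<Sum>b<m. cnj (V $$ (a, j)) * (\<Sum>k<n. U $$ (s a, k) * of_real (d k) * cnj (U $$ (s b, k))) * V $$ (b, j))"
    unfolding quadratic_form_gram[symmetric] by (intro sum.cong refl) (simp add: entry)
  also have "\<dots> = complex_of_real (\<Sum>l<n. overlap_weight m V U s j l * d l)"
    unfolding quadratic_form_gram overlap_weight_def by (simp add: mult.commute)
  finally show ?thesis
    by (metis of_real_eq_iff)
qed

lemma pick_bij_betw:
  assumes "finite S" "card S = m"
  shows "bij_betw (pick S) {..<m} S"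
proof -
  have "inj_on (pick S) {..<m}"
    using assms(2) by (intro inj_onI) (metis lessThan_iff linorder_neqE_nat pick_mono_le less_irrefl)
  moreover have "pick S ` {..<m} \<subseteq> S"
    using assms(2) pick_in_set_le by auto
  ultimately show ?thesis
    using assms card_image card_subset_eq unfolding bij_betw_def by (metis card_lessThan)
qed

lemma principal_submatrix_eq:
  assumes "A \<in> carrier_mat n n" "S \<subseteq> {..<n}" "card S = m"
  shows "submatrix A S S = mat m m (\<lambda>(a, b). A $$ (pick S a, pick S b))"
proof -
  have "{i. i < n \<and> i \<in> S} = S"
    using assms(2) by auto
  then show ?thesis
    using assms unfolding submatrix_def by simp
qed

lemma principal_submatrix_eigenvalue_weights:
  assumes A: "hermitian_mat n A" and U: "unitary_mat n U"
    and A_eq: "A = U * mat_diag n (\<lambda>i. complex_of_real (d i)) * mat_adjoint U"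
    and S: "S \<subseteq> {..<n}" "card S = m"
  obtains \<mu> w where "eig_mset (submatrix A S S) = mset (map \<mu> [0..<m])"
    and "\<And>j l. 0 \<le> w j l" and "\<And>j. j < m \<Longrightarrow> (\<Sum>l<n. w j l) = 1"
    and "\<And>j. j < m \<Longrightarrow> \<mu> j = (\<Sum>l<n. w j l * d l)"
    and "\<And>l. l < n \<Longrightarrow> (\<Sum>j<m. w j l) = (\<Sum>i\<in>S. (cmod (U $$ (i, l)))\<^sup>2)"
proof -
  have Ac: "A \<in> carrier_mat n n"
    using A unfolding hermitian_mat_def by auto
  have bij: "bij_betw (pick S) {..<m} S"
    using S finite_subset by (intro pick_bij_betw) auto
  then have s_inj: "inj_on (pick S) {..<m}" and s_range: "pick S ` {..<m} \<subseteq> {..<n}"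
    using S unfolding bij_betw_def by auto
  have B_eq: "submatrix A S S = mat m m (\<lambda>(a, b). A $$ (pick S a, pick S b))"
    by (rule principal_submatrix_eq[OF Ac S])
  have "hermitian_mat m (submatrix A S S)"
    using A s_range unfolding B_eq hermitian_mat_def by auto
  then obtain V \<mu> where V: "unitary_mat m V"
    and B: "submatrix A S S = V * mat_diag m (\<lambda>i. complex_of_real (\<mu> i)) * mat_adjoint V"
    using hermitian_mat_spectral by blast
  have principal: "(V * mat_diag m (\<lambda>i. complex_of_real (\<mu> i)) * mat_adjoint V) $$ (a, b) =
      (U * mat_diag n (\<lambda>i. complex_of_real (d i)) * mat_adjoint U) $$ (pick S a, pick S b)"
    if "a < m" "b < m" for a b
    using that unfolding B[symmetric] A_eq[symmetric] B_eq by simp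
  show ?thesis
  proof (rule that[of \<mu> "overlap_weight m V U (pick S)"])
    show "eig_mset (submatrix A S S) = mset (map \<mu> [0..<m])"
      unfolding B by (rule eig_mset_unitary_diag[OF V])
    show "0 \<le> overlap_weight m V U (pick S) j l" for j l
      unfolding overlap_weight_def by simp
    show "(\<Sum>l<n. overlap_weight m V U (pick S) j l) = 1" if "j < m" for j
      by (rule overlap_weight_row_sum[OF U V s_inj s_range that])
    show "\<mu> j = (\<Sum>l<n. overlap_weight m V U (pick S) j l * d l)" if "j < m" for j
      using U unfolding unitary_mat_def by (intro eigenvalue_eq_overlap_weighted[OF _ V s_range principal that]) auto
    show "(\<Sum>j<m. overlap_weight m V U (pick S) j l) = (\<Sum>i\<in>S. (cmod (U $$ (i, l)))\<^sup>2)" if "l < n" for l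
      using overlap_weight_col_sum[OF V] sum.reindex_bij_betw[OF bij] by simp
  qed
qed

lemma convex_on_sum_stochastic_rows:
  fixes g :: "real \<Rightarrow> real" and w :: "nat \<Rightarrow> nat \<Rightarrow> real"
  assumes g: "convex_on UNIV g" and w: "\<And>j l. 0 \<le> w j l" and rows: "\<And>j. j < m \<Longrightarrow> (\<Sum>l<n. w j l) = 1"
  shows "(\<Sum>j<m. g (\<Sum>l<n. w j l * x l)) \<le> (\<Sum>l<n. (\<Sum>j<m. w j l) * g (x l))"
proof -
  have "g (\<Sum>l<n. w j l * x l) \<le> (\<Sum>l<n. w j l * g (x l))" if "j < m" for j
    using convex_on_sum[OF _ _ g rows[OF that] w, of x] rows[OF that] by fastforce
  then have "(\<Sum>j<m. g (\<Sum>l<n. w j l * x l)) \<le> (\<Sum>j<m. \<Sum>l<n. w j l * g (x l))"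
    by (intro sum_mono) auto
  also have "\<dots> = (\<Sum>l<n. (\<Sum>j<m. w j l) * g (x l))"
    by (subst sum.swap) (simp add: sum_distrib_right)
  finally show ?thesis .
qed

lemma sum_mset_mset_map_upt: "(\<Sum>x\<in>#mset (map f [0..<m]). g x) = (\<Sum>j<m. g (f j))"
  by (simp add: multiset.map_comp o_def sum_unfold_sum_mset atLeast0LessThan)

lemma convex_sum_submatrix_eigenvalues_le:
  assumes A: "hermitian_mat n A" and U: "unitary_mat n U"
    and A_eq: "A = U * mat_diag n (\<lambda>i. complex_of_real (d i)) * mat_adjoint U"
    and S: "S \<subseteq> {..<n}" "card S = m" and g: "convex_on UNIV g"
  shows "(\<Sum>x\<in>#eig_mset (submatrix A S S). g x) \<le> (\<Sum>l<n. (\<Sum>i\<in>S. (cmod (U $$ (i, l)))\<^sup>2) * g (d l))"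
proof -
  obtain \<mu> w where eig: "eig_mset (submatrix A S S) = mset (map \<mu> [0..<m])"
    and w: "\<And>j l. 0 \<le> w j l" "\<And>j. j < m \<Longrightarrow> (\<Sum>l<n. w j l) = 1"
    and \<mu>: "\<And>j. j < m \<Longrightarrow> \<mu> j = (\<Sum>l<n. w j l * d l)"
    and cols: "\<And>l. l < n \<Longrightarrow> (\<Sum>j<m. w j l) = (\<Sum>i\<in>S. (cmod (U $$ (i, l)))\<^sup>2)"
    using principal_submatrix_eigenvalue_weights[OF A U A_eq S] by blast
  have "(\<Sum>x\<in>#eig_mset (submatrix A S S). g x) = (\<Sum>j<m. g (\<Sum>l<n. w j l * d l))"
    unfolding eig sum_mset_mset_map_upt using \<mu> by simp
  also have "\<dots> \<le> (\<Sum>l<n. (\<Sum>j<m. w j l) * g (d l))"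
    by (rule convex_on_sum_stochastic_rows[OF g w])
  also have "\<dots> = (\<Sum>l<n. (\<Sum>i\<in>S. (cmod (U $$ (i, l)))\<^sup>2) * g (d l))"
    using cols by simp
  finally show ?thesis .
qed

section \<open>Summing over all principal submatrices\<close>

lemma card_subsets_containing:
  assumes N: "finite N" and i: "i \<in> N" and m: "1 \<le> m"
  shows "card {S. S \<subseteq> N \<and> card S = m \<and> i \<in> S} = (card N - 1) choose (m - 1)"
proof -
  have "bij_betw (\<lambda>S. S - {i}) {S. S \<subseteq> N \<and> card S = m \<and> i \<in> S} {T. T \<subseteq> N - {i} \<and> card T = m - 1}"
  proof (rule bij_betw_byWitness[where f' = "insert i"])
    show "(\<lambda>S. S - {i}) ` {S. S \<subseteq> N \<and> card S = m \<and> i \<in> S} \<subseteq> {T. T \<subseteq> N - {i} \<and> card T = m - 1}"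
      using N by (auto dest: finite_subset)
    show "insert i ` {T. T \<subseteq> N - {i} \<and> card T = m - 1} \<subseteq> {S. S \<subseteq> N \<and> card S = m \<and> i \<in> S}"
    proof
      fix S assume "S \<in> insert i ` {T. T \<subseteq> N - {i} \<and> card T = m - 1}"
      then obtain T where T: "T \<subseteq> N - {i}" "card T = m - 1" "S = insert i T"
        by auto
      moreover have "finite T" "i \<notin> T"
        using T(1) N finite_subset by auto
      ultimately show "S \<in> {S. S \<subseteq> N \<and> card S = m \<and> i \<in> S}"
        using i m by auto
    qed
  qed auto
  then have "card {S. S \<subseteq> N \<and> card S = m \<and> i \<in> S} = card (N - {i}) choose (m - 1)"
    using N by (simp add: bij_betw_same_card n_subsets)
  then show ?thesis
    using N i by simp
qed

lemma sum_over_subsets_of_card: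
  fixes h :: "'a \<Rightarrow> 'b :: comm_semiring_1"
  assumes N: "finite N" and m: "1 \<le> m"
  shows "(\<Sum>S | S \<subseteq> N \<and> card S = m. \<Sum>i\<in>S. h i) = of_nat ((card N - 1) choose (m - 1)) * (\<Sum>i\<in>N. h i)"
proof -
  let ?F = "{S. S \<subseteq> N \<and> card S = m}"
  have "?F \<subseteq> Pow N"
    by auto
  then have "finite ?F"
    using N finite_subset by blast
  have "(\<Sum>S\<in>?F. \<Sum>i\<in>S. h i) = (\<Sum>S\<in>?F. \<Sum>i | i \<in> N \<and> i \<in> S. h i)"
    by (intro sum.cong refl) (auto intro: arg_cong[where f = "\<lambda>A. sum h A"])
  also have "\<dots> = (\<Sum>i\<in>N. \<Sum>S | S \<in> ?F \<and> i \<in> S. h i)"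
    using sum.swap_restrict[OF \<open>finite ?F\<close> N, of "\<lambda>_ i. h i" "\<lambda>S i. i \<in> S"] by simp
  also have "\<dots> = (\<Sum>i\<in>N. of_nat ((card N - 1) choose (m - 1)) * h i)"
    using card_subsets_containing[OF N _ m] by (intro sum.cong refl) simp
  finally show ?thesis
    by (simp add: sum_distrib_left)
qed

lemma sum_mset_image_sum: "(\<Sum>x\<in>#(\<Sum>S\<in>F. M S). g x) = (\<Sum>S\<in>F. \<Sum>x\<in>#M S. g x)"
  by (induction F rule: infinite_finite_induct) auto

lemma sum_mset_image_repeat_mset: "(\<Sum>x\<in>#repeat_mset c M. g x) = of_nat c * (\<Sum>x\<in>#M. g x)"
proof (induction c)
  case (Suc c)
  have "(\<Sum>x\<in>#repeat_mset (Suc c) M. g x) = (\<Sum>x\<in>#M. g x) + (\<Sum>x\<in>#repeat_mset c M. g x)"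
    by simp
  also have "\<dots> = of_nat (Suc c) * (\<Sum>x\<in>#M. g x)"
    unfolding Suc.IH by (simp only: of_nat_Suc distrib_right mult_1_left add.commute)
  finally show ?case .
qed simp

lemma convex_sum_X_mset_le_Y_mset:
  assumes A: "hermitian_mat n A" and m: "1 \<le> m" and g: "convex_on UNIV g"
  shows "(\<Sum>x\<in>#X_mset m A. g x) \<le> (\<Sum>x\<in>#Y_mset n m A. g x)"
proof -
  obtain U d where U: "unitary_mat n U"
    and A_eq: "A = U * mat_diag n (\<lambda>i. complex_of_real (d i)) * mat_adjoint U"
    using hermitian_mat_spectral[OF A] by blast
  have dim: "dim_row A = n"
    using A unfolding hermitian_mat_def by auto
  let ?F = "{S. S \<subseteq> {..<n} \<and> card S = m}"
  let ?C = "(n - 1) choose (m - 1)"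
  have "(\<Sum>x\<in>#X_mset m A. g x) = (\<Sum>S\<in>?F. \<Sum>x\<in>#eig_mset (submatrix A S S). g x)"
    unfolding X_mset_def dim by (rule sum_mset_image_sum)
  also have "\<dots> \<le> (\<Sum>S\<in>?F. \<Sum>l<n. (\<Sum>i\<in>S. (cmod (U $$ (i, l)))\<^sup>2) * g (d l))"
    by (intro sum_mono convex_sum_submatrix_eigenvalues_le[OF A U A_eq _ _ g]) auto
  also have "\<dots> = (\<Sum>l<n. (\<Sum>S\<in>?F. \<Sum>i\<in>S. (cmod (U $$ (i, l)))\<^sup>2) * g (d l))"
    by (subst sum.swap) (simp add: sum_distrib_right)
  also have "\<dots> = (\<Sum>l<n. of_nat ?C * g (d l))"
  proof (intro sum.cong refl)
    fix l assume "l \<in> {..<n}"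
    then show "(\<Sum>S\<in>?F. \<Sum>i\<in>S. (cmod (U $$ (i, l)))\<^sup>2) * g (d l) = of_nat ?C * g (d l)"
      using sum_over_subsets_of_card[OF finite_lessThan m, of "\<lambda>i. (cmod (U $$ (i, l)))\<^sup>2"]
        unitary_mat_col_norm[OF U, of l] by simp
  qed
  also have "\<dots> = (\<Sum>x\<in>#Y_mset n m A. g x)"
    unfolding Y_mset_def A_eq eig_mset_unitary_diag[OF U] sum_mset_image_repeat_mset sum_mset_mset_map_upt
    by (simp add: sum_distrib_left)
  finally show ?thesis .
qed

section \<open>Majorization from convex test functions\<close>

lemma convex_on_affine: "convex_on UNIV (\<lambda>x :: real. a * x + b)"
  by (rule convex_onI) (auto simp: algebra_simps)

lemma convex_on_pos_part: "convex_on UNIV (\<lambda>x :: real. max 0 (x - t))"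
proof (rule convex_onI)
  fix s x y :: real assume s: "0 < s" "s < 1"
  have "(1 - s) * x + s * y - t = (1 - s) * (x - t) + s * (y - t)"
    by (simp add: algebra_simps)
  also have "\<dots> \<le> (1 - s) * max 0 (x - t) + s * max 0 (y - t)"
    using s by (intro add_mono mult_left_mono) auto
  finally show "max 0 ((1 - s) *\<^sub>R x + s *\<^sub>R y - t) \<le> (1 - s) * max 0 (x - t) + s * max 0 (y - t)"
    using s by simp
qed simp

lemma sum_list_take_le_pos_part:
  fixes xs :: "real list"
  shows "sum_list (take k xs) \<le> sum_list (map (\<lambda>x. max 0 (x - t)) xs) + real (min k (length xs)) * t"
proof (induction xs arbitrary: k)
  case (Cons x xs)
  show ?case
  proof (cases k)
    case 0
    then show ?thesis
      by (auto intro!: sum_list_nonneg add_nonneg_nonneg)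
  next
    case (Suc k')
    then show ?thesis
      using Cons.IH[of k'] by (simp add: algebra_simps)
  qed
qed simp

lemma sum_list_take_eq_pos_part:
  fixes xs :: "real list"
  assumes "\<forall>i<k. t \<le> xs ! i" and "\<forall>i. k \<le> i \<and> i < length xs \<longrightarrow> xs ! i \<le> t"
  shows "sum_list (take k xs) = sum_list (map (\<lambda>x. max 0 (x - t)) xs) + real (min k (length xs)) * t"
  using assms
proof (induction xs arbitrary: k)
  case (Cons x xs)
  show ?case
  proof (cases k)
    case 0
    then have "\<forall>y\<in>set (x # xs). y \<le> t"
      using Cons.prems(2) by (metis in_set_conv_nth le0)
    then have "(\<Sum>y\<leftarrow>x # xs. max 0 (y - t)) = (\<Sum>y\<leftarrow>x # xs. 0)"
      by (intro arg_cong[where f = sum_list] map_cong) auto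
    then show ?thesis
      using 0 by simp
  next
    case (Suc k')
    have "sum_list (take k' xs) = sum_list (map (\<lambda>x. max 0 (x - t)) xs) + real (min k' (length xs)) * t"
      using Cons.prems Suc by (intro Cons.IH) auto
    moreover have "t \<le> x"
      using Cons.prems(1) Suc by force
    ultimately show ?thesis
      using Suc by (simp add: algebra_simps)
  qed
qed simp

lemma sum_mset_affine: "(\<Sum>x\<in>#X. a * x + b) = a * sum_mset X + b * real (size X)"
  by (induction X) (auto simp: algebra_simps)

lemma sum_list_map_eq_sum_mset: "(\<Sum>x\<leftarrow>xs. f x) = (\<Sum>x\<in>#mset xs. f x)"
  by (induction xs) auto

lemma sum_take_le_if_pos_part_sums_le:
  fixes xs ys :: "real list"
  assumes sorted: "sorted_wrt (\<ge>) ys" and len: "length xs = length ys" and k: "1 \<le> k" "k \<le> length ys"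
    and pos: "\<And>t. (\<Sum>x\<leftarrow>xs. max 0 (x - t)) \<le> (\<Sum>y\<leftarrow>ys. max 0 (y - t))"
  shows "sum_list (take k xs) \<le> sum_list (take k ys)"
proof -
  have nth_mono: "ys ! j \<le> ys ! i" if "i \<le> j" "j < length ys" for i j
    using sorted that unfolding sorted_wrt_iff_nth_less by (cases "i = j") auto
  define t where "t = ys ! (k - 1)"
  have big: "\<forall>i<k. t \<le> ys ! i" and small: "\<forall>i. k \<le> i \<and> i < length ys \<longrightarrow> ys ! i \<le> t"
    using k nth_mono unfolding t_def by auto
  have "sum_list (take k xs) \<le> (\<Sum>x\<leftarrow>xs. max 0 (x - t)) + real (min k (length xs)) * t"
    by (rule sum_list_take_le_pos_part)
  also have "\<dots> \<le> (\<Sum>y\<leftarrow>ys. max 0 (y - t)) + real (min k (length ys)) * t"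
    using pos[of t] len by simp
  also have "\<dots> = sum_list (take k ys)"
    using sum_list_take_eq_pos_part[OF big small] by simp
  finally show ?thesis .
qed

lemma majorizes_if_convex_sums_le:
  assumes convex: "\<And>g. convex_on UNIV g \<Longrightarrow> (\<Sum>x\<in>#X. g x) \<le> (\<Sum>x\<in>#Y. g x)"
  shows "majorizes Y X"
proof -
  have mset: "mset (decr X) = X" "mset (decr Y) = Y"
    unfolding decr_def by simp_all
  have affine: "a * sum_mset X + b * real (size X) \<le> a * sum_mset Y + b * real (size Y)" for a b
    using convex[OF convex_on_affine[of a b]] by (simp add: sum_mset_affine)
  have "real (size X) = real (size Y)"
    using affine[of 0 1] affine[of 0 "- 1"] by linarith
  then have size: "size X = size Y"
    by simp
  have "sum_mset X = sum_mset Y"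
    using affine[of 1 0] affine[of "- 1" 0] by linarith
  then have sum: "sum_list (decr X) = sum_list (decr Y)"
    using mset by (metis sum_mset_sum_list)
  have "sum_list (take k (decr X)) \<le> sum_list (take k (decr Y))" if "k \<in> {1..size Y}" for k
  proof (rule sum_take_le_if_pos_part_sums_le)
    show "sorted_wrt (\<ge>) (decr Y)"
      unfolding decr_def by (simp add: sorted_wrt_rev)
    show "length (decr X) = length (decr Y)"
      using mset size by (metis size_mset)
    show "k \<le> length (decr Y)"
      using mset(2) that by (metis size_mset atLeastAtMost_iff)
    show "(\<Sum>x\<leftarrow>decr X. max 0 (x - t)) \<le> (\<Sum>y\<leftarrow>decr Y. max 0 (y - t))" for t
      using convex[OF convex_on_pos_part[of t]] unfolding sum_list_map_eq_sum_mset mset .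
  qed (use that in auto)
  then show ?thesis
    unfolding majorizes_def using size sum by simp
qed

theorem theorem4p5:
  fixes n m :: nat and A :: "complex mat"
  assumes "1 \<le> n" and "hermitian_mat n A" and "1 \<le> m" and "m \<le> n"
  shows "majorizes (Y_mset n m A) (X_mset m A)"
  by (rule majorizes_if_convex_sums_le[OF convex_sum_X_mset_le_Y_mset[OF assms(2,3)]])

end
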